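(* Let $N\ge 3$ and consider the complete graph $K_N$ as a PIR system with file length $L=2^{N-1}$, and the following scheme. Suppose the desired file is $W_{i,i'}$. Let $\Omega=\{P\subseteq[N]: |P\cap\{i,i'\}|=1\}$ (so $|\Omega|=L$), and let the user choose a bijection $\pi:\Omega\to[L]$ uniformly at random. For each server $j$ the user builds a bijection $\sigma_j$ from the family of all subsets of $N(j)=[N]\setminus\{j\}$ onto $[L]$ as follows: if $j\notin\{i,i'\}$, set $\sigma_j(P\setminus\{j\})=\pi(P)$ for every $P\in\Omega$ with $j\in P$; if $a\in\{i,i'\}$ and $\bar a$ denotes the other element of $\{i,i'\}$, set $\sigma_a(\{\bar a\}\cup(P\setminus\{a\}))=\pi(P)$ for every $P\in\Omega$ with $a\in P$; in both cases, the remaining values are assigned so that $\sigma_j$ becomes a bijection, uniformly at random among such completions. The query to server $j$ is $\sigma_j$. Server $j$ answers with the $L-1$ bits \[ b^j_P=\bigoplus_{v\in P}(W_{j,v})_{\sigma_j(P)},\qquad \emptyset\ne P\subseteq N(j), \] where $(W)_l$ is the $l$-th bit of $W$. Then this scheme is a PIR scheme (reliable and private) with rate $\frac{2^{N-1}}{2^{N-1}-1}\cdot\frac{1}{N}$.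
   Context: Graph-based PIR model on the complete graph $K_N$: servers $1,\dots,N$; for each pair of distinct servers $j,v$ there is exactly one file $W_{j,v}=W_{v,j}$, stored on servers $j$ and $v$; files are independent, each uniform on $\mathbb{F}_2^L$. A user wants one file, whose index $\theta$ is uniform and independent of the files; it sends a query to each server, and each server answers with a deterministic function of its query and the files it stores. Reliability: the desired file is determined by all answers and queries. Privacy: for each server $j$, $H(\theta\mid Q_j,W_{S_j})=H(\theta)$, where $Q_j$ is the query to server $j$ and $W_{S_j}$ the files it stores. The rate is $L$ divided by the total number of answer bits (here, the sum of the entropies $H(A_j)$). *)

theory Defs
  imports "HOL-Probability.Probability"
begin

text \<open>Servers are 1..N; the file on the edge {j,v} is indexed by the 2-set {j,v}.
 A file is a bit string of length L, i.e. a function from {1..L} to bool (extensional).\<close>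

definition edges :: "nat \<Rightarrow> nat set set" where
  "edges N = {{j, v} | j v. j \<in> {1..N} \<and> v \<in> {1..N} \<and> j \<noteq> v}"

definition flen :: "nat \<Rightarrow> nat" where
  "flen N = 2 ^ (N - 1)"

definition file_space :: "nat \<Rightarrow> (nat set \<Rightarrow> nat \<Rightarrow> bool) set" where
  "file_space N = edges N \<rightarrow>\<^sub>E ({1..flen N} \<rightarrow>\<^sub>E (UNIV :: bool set))"

definition nbhd :: "nat \<Rightarrow> nat \<Rightarrow> nat set" where
  "nbhd N j = {1..N} - {j}"

definition Omega :: "nat \<Rightarrow> nat set \<Rightarrow> nat set set" where
  "Omega N \<theta> = {P. P \<subseteq> {1..N} \<and> card (P \<inter> \<theta>) = 1}"

definition perms :: "nat \<Rightarrow> nat set \<Rightarrow> (nat set \<Rightarrow> nat) set" where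
  "perms N \<theta> = {\<pi> \<in> Omega N \<theta> \<rightarrow>\<^sub>E {1..flen N}. bij_betw \<pi> (Omega N \<theta>) {1..flen N}}"

definition other :: "nat set \<Rightarrow> nat \<Rightarrow> nat" where
  "other \<theta> a = the_elem (\<theta> - {a})"

definition completions :: "nat \<Rightarrow> nat set \<Rightarrow> (nat set \<Rightarrow> nat) \<Rightarrow> nat \<Rightarrow> (nat set \<Rightarrow> nat) set" where
  "completions N \<theta> \<pi> j =
     {s \<in> Pow (nbhd N j) \<rightarrow>\<^sub>E {1..flen N}.
        bij_betw s (Pow (nbhd N j)) {1..flen N} \<and>
        (if j \<in> \<theta>
         then (\<forall>P \<in> Omega N \<theta>. j \<in> P \<longrightarrow> s (insert (other \<theta> j) (P - {j})) = \<pi> P)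
         else (\<forall>P \<in> Omega N \<theta>. j \<in> P \<longrightarrow> s (P - {j}) = \<pi> P))}"

definition query_dist :: "nat \<Rightarrow> nat set \<Rightarrow> (nat \<Rightarrow> nat set \<Rightarrow> nat) pmf" where
  "query_dist N \<theta> =
     do { \<pi> \<leftarrow> pmf_of_set (perms N \<theta>);
          pmf_of_set (PiE {1..N} (completions N \<theta> \<pi>)) }"

text \<open>Answer of server j to query s: the bits b_P = XOR_{v in P} (W_{j,v})_{s(P)},
  for nonempty P subset of N(j). (XOR of bits = parity of the number of true bits.)\<close>
definition answer :: "nat \<Rightarrow> (nat set \<Rightarrow> nat \<Rightarrow> bool) \<Rightarrow> nat \<Rightarrow> (nat set \<Rightarrow> nat) \<Rightarrow> (nat set \<Rightarrow> bool)" where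
  "answer N W j s = (\<lambda>P \<in> Pow (nbhd N j) - {{}}. odd (card {v \<in> P. W {j, v} (s P)}))"

definition scheme :: "nat \<Rightarrow> (nat set \<times> (nat set \<Rightarrow> nat \<Rightarrow> bool) \<times> (nat \<Rightarrow> nat set \<Rightarrow> nat)) pmf" where
  "scheme N =
     do { \<theta> \<leftarrow> pmf_of_set (edges N);
          W \<leftarrow> pmf_of_set (file_space N);
          \<sigma> \<leftarrow> query_dist N \<theta>;
          return_pmf (\<theta>, W, \<sigma>) }"

definition ent :: "'a pmf \<Rightarrow> ('a \<Rightarrow> 'b) \<Rightarrow> real" where
  "ent p X = (\<Sum>x \<in> set_pmf (map_pmf X p). - pmf (map_pmf X p) x * log 2 (pmf (map_pmf X p) x))"

definition cond_ent :: "'a pmf \<Rightarrow> ('a \<Rightarrow> 'b) \<Rightarrow> ('a \<Rightarrow> 'c) \<Rightarrow> real" where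
  "cond_ent p X Y = ent p (\<lambda>\<omega>. (X \<omega>, Y \<omega>)) - ent p Y"

end

theory Submission
  imports Defs
begin

text \<open>
  Reliability: let \<open>\<pi> P = l\<close> where \<open>P\<close> meets \<open>\<theta> = {a, b}\<close> in \<open>a\<close>. Server \<open>a\<close>
  answers at \<open>{b} \<union> (P - {a})\<close> and every other server \<open>c \<in> P\<close> at \<open>P - {c}\<close>, all
  with label \<open>l\<close>. In the XOR of these \<open>|P|\<close> answer bits each bit \<open>(W\<^sub>c\<^sub>v)\<^sub>l\<close> with
  \<open>c, v \<in> P\<close> occurs twice and \<open>(W\<^sub>a\<^sub>b)\<^sub>l\<close> once, so the XOR is \<open>(W\<^sub>\<theta>)\<^sub>l\<close>.

  Privacy: relabelling \<open>[L]\<close> by a permutation \<open>\<tau>\<close> sends \<open>\<pi>\<close> to \<open>\<tau> \<circ> \<pi>\<close> and the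
  completions of \<open>\<pi>\<close> bijectively onto those of \<open>\<tau> \<circ> \<pi>\<close>, so it preserves the law of
  \<open>\<sigma>\<^sub>j\<close>. These relabellings act transitively on the bijections from the subsets of
  \<open>N(j)\<close> onto \<open>[L]\<close>, hence \<open>\<sigma>\<^sub>j\<close> is uniform whatever \<open>\<theta>\<close> is, and the view
  \<open>(\<sigma>\<^sub>j, W)\<close> of server \<open>j\<close> is independent of \<open>\<theta>\<close>.

  Rate: for a fixed bijection \<open>\<sigma>\<^sub>j\<close>, flipping bit \<open>\<sigma>\<^sub>j(P)\<close> of the file on the edge
  \<open>{j, min P}\<close> flips the answer bit \<open>b\<^sub>P\<close> and no other one. So the \<open>L - 1\<close> answer
  bits of each server are uniform, i.e. each answer has entropy \<open>L - 1\<close>.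
\<close>

section \<open>Finite distributions and their entropy\<close>

definition pmf_entropy :: "'a pmf \<Rightarrow> real" where
  "pmf_entropy q = (\<Sum>x \<in> set_pmf q. - pmf q x * log 2 (pmf q x))"

lemma ent_eq_pmf_entropy: "ent p X = pmf_entropy (map_pmf X p)"
  by (simp add: ent_def pmf_entropy_def)

lemma pmf_entropy_map_inj:
  assumes "inj_on f (set_pmf q)"
  shows "pmf_entropy (map_pmf f q) = pmf_entropy q"
proof -
  have "pmf_entropy (map_pmf f q) =
        (\<Sum>x \<in> set_pmf q. - pmf (map_pmf f q) (f x) * log 2 (pmf (map_pmf f q) (f x)))"
    by (simp add: pmf_entropy_def sum.reindex[OF assms])
  also have "\<dots> = pmf_entropy q"
    unfolding pmf_entropy_def by (intro sum.cong refl) (simp add: pmf_map_inj[OF assms])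
  finally show ?thesis .
qed

lemma pmf_entropy_pair:
  assumes "finite (set_pmf A)" "finite (set_pmf B)"
  shows "pmf_entropy (pair_pmf A B) = pmf_entropy A + pmf_entropy B"
proof -
  have sum_A: "(\<Sum>a\<in>set_pmf A. pmf A a) = 1" and sum_B: "(\<Sum>b\<in>set_pmf B. pmf B b) = 1"
    using sum_pmf_eq_1 assms by blast+
  have "pmf_entropy (pair_pmf A B) =
        (\<Sum>a\<in>set_pmf A. \<Sum>b\<in>set_pmf B. - (pmf A a * pmf B b) * log 2 (pmf A a * pmf B b))"
    unfolding pmf_entropy_def set_pair_pmf sum.cartesian_product
    by (intro sum.cong refl) (auto simp: pmf_pair)
  also have "\<dots> = (\<Sum>a\<in>set_pmf A. \<Sum>b\<in>set_pmf B.
                    pmf B b * (- pmf A a * log 2 (pmf A a)) +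
                    pmf A a * (- pmf B b * log 2 (pmf B b)))"
    by (intro sum.cong refl) (simp add: log_mult pmf_positive algebra_simps)
  also have "\<dots> = (\<Sum>a\<in>set_pmf A. (\<Sum>b\<in>set_pmf B. pmf B b) * (- pmf A a * log 2 (pmf A a))
                    + pmf A a * (\<Sum>b\<in>set_pmf B. - pmf B b * log 2 (pmf B b)))"
    by (simp only: sum.distrib sum_distrib_right[symmetric] sum_distrib_left[symmetric])
  also have "\<dots> = pmf_entropy A + (\<Sum>a\<in>set_pmf A. pmf A a) * pmf_entropy B"
    by (simp only: sum_B sum.distrib sum_distrib_right[symmetric] pmf_entropy_def mult_1)
  also have "\<dots> = pmf_entropy A + pmf_entropy B"
    by (simp add: sum_A sum_B)
  finally show ?thesis .
qed

lemma pmf_entropy_pmf_of_set: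
  assumes "finite T" "T \<noteq> {}"
  shows "pmf_entropy (pmf_of_set T) = log 2 (card T)"
  using assms by (simp add: pmf_entropy_def log_divide)

lemma cond_ent_eq_ent_if_pair_pmf:
  assumes "map_pmf (\<lambda>\<omega>. (X \<omega>, Z \<omega>)) p = pair_pmf A B" "finite (set_pmf A)" "finite (set_pmf B)"
  shows "cond_ent p X (\<lambda>\<omega>. h (Z \<omega>)) = ent p X"
proof -
  have "map_pmf (\<lambda>\<omega>. (X \<omega>, h (Z \<omega>))) p = pair_pmf A (map_pmf h B)"
    using arg_cong[OF assms(1), of "map_pmf (apsnd h)"] by (simp add: map_pmf_comp pair_map_pmf2)
  moreover have "map_pmf (\<lambda>\<omega>. h (Z \<omega>)) p = map_pmf h B" "map_pmf X p = A"
    using arg_cong[OF assms(1), of "map_pmf (h \<circ> snd)"] arg_cong[OF assms(1), of "map_pmf fst"]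
    by (simp_all add: map_pmf_comp map_pmf_compose map_snd_pair_pmf map_fst_pair_pmf)
  ultimately show ?thesis
    using assms(2,3) by (simp add: cond_ent_def ent_eq_pmf_entropy pmf_entropy_pair)
qed

lemma cond_ent_eq_0_if_determined:
  assumes det: "\<And>\<omega> \<omega>'. \<omega> \<in> set_pmf p \<Longrightarrow> \<omega>' \<in> set_pmf p \<Longrightarrow> Y \<omega> = Y \<omega>' \<Longrightarrow> X \<omega> = X \<omega>'"
  shows "cond_ent p X Y = 0"
proof -
  define g where "g y = X (SOME \<omega>. \<omega> \<in> set_pmf p \<and> Y \<omega> = y)" for y
  have "X \<omega> = g (Y \<omega>)" if \<omega>: "\<omega> \<in> set_pmf p" for \<omega>
    unfolding g_def by (rule someI2[of _ \<omega>]) (auto intro: det[OF \<omega>] \<omega>)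
  then have "map_pmf (\<lambda>\<omega>. (X \<omega>, Y \<omega>)) p = map_pmf (\<lambda>y. (g y, y)) (map_pmf Y p)"
    unfolding map_pmf_comp by (intro map_pmf_cong) simp_all
  then show ?thesis
    by (simp add: cond_ent_def ent_eq_pmf_entropy pmf_entropy_map_inj inj_on_def)
qed

lemma eq_pmf_of_set_if_transitive_invariance:
  assumes fin: "finite T" and supp: "set_pmf \<mu> \<subseteq> T"
    and transitive: "\<And>a b. a \<in> T \<Longrightarrow> b \<in> T \<Longrightarrow> \<exists>g. inj_on g T \<and> map_pmf g \<mu> = \<mu> \<and> g a = b"
  shows "\<mu> = pmf_of_set T"
proof -
  have le: "pmf \<mu> a \<le> pmf \<mu> b" if ab: "a \<in> T" "b \<in> T" for a b
  proof (cases "a \<in> set_pmf \<mu>")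
    case True
    obtain g where g: "inj_on g T" "map_pmf g \<mu> = \<mu>" "g a = b"
      using transitive[OF ab] by blast
    have "pmf (map_pmf g \<mu>) (g a) = pmf \<mu> a"
      using True g(1) supp by (intro pmf_map_inj) (auto intro: inj_on_subset)
    then show ?thesis using g by simp
  qed (simp add: set_pmf_eq)
  obtain a0 where a0: "a0 \<in> set_pmf \<mu>" using set_pmf_not_empty by fast
  with supp have a0T: "a0 \<in> T" by blast
  then have T_ne: "T \<noteq> {}" by blast
  have const: "pmf \<mu> a = pmf \<mu> a0" if "a \<in> T" for a
    using le[OF that a0T] le[OF a0T that] by simp
  have card_T: "card T \<noteq> 0" using fin T_ne by simp
  have "1 = (\<Sum>x\<in>T. pmf \<mu> x)" by (rule sum_pmf_eq_1[OF fin supp, symmetric])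
  also have "\<dots> = card T * pmf \<mu> a0" by (simp add: const)
  finally have p0: "pmf \<mu> a0 = 1 / card T" using card_T by (simp add: field_simps)
  show ?thesis
  proof (rule pmf_eqI)
    fix x
    show "pmf \<mu> x = pmf (pmf_of_set T) x"
    proof (cases "x \<in> T")
      case True
      then show ?thesis using const p0 fin T_ne by simp
    next
      case False
      then have "x \<notin> set_pmf \<mu>" using supp by blast
      then show ?thesis using False fin T_ne by (simp add: set_pmf_eq)
    qed
  qed
qed

lemma map_pmf_of_set_PiE_component:
  assumes "finite I" "i \<in> I" "\<And>i. i \<in> I \<Longrightarrow> finite (B i)" "\<And>i. i \<in> I \<Longrightarrow> B i \<noteq> {}"
  shows "map_pmf (\<lambda>f. f i) (pmf_of_set (PiE I B)) = pmf_of_set (B i)"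
proof -
  have "PiE I B = PiE_dflt I undefined B"
    by (auto simp: PiE_dflt_def PiE_def extensional_def Pi_def)
  then have "pmf_of_set (PiE I B) = Pi_pmf I undefined (\<lambda>i. pmf_of_set (B i))"
    using Pi_pmf_of_set[of I B undefined] assms by simp
  then show ?thesis
    using Pi_pmf_component[OF assms(1), of i undefined "\<lambda>i. pmf_of_set (B i)"] assms(2) by simp
qed

section \<open>Bijections and their relabellings\<close>

definition ext_bijections :: "'a set \<Rightarrow> 'b set \<Rightarrow> ('a \<Rightarrow> 'b) set" where
  "ext_bijections D S = {s \<in> D \<rightarrow>\<^sub>E S. bij_betw s D S}"

lemma finite_ext_bijections: "finite D \<Longrightarrow> finite S \<Longrightarrow> finite (ext_bijections D S)"
  unfolding ext_bijections_def by (rule finite_subset[of _ "D \<rightarrow>\<^sub>E S"]) (auto intro: finite_PiE)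

lemma restrict_in_ext_bijections: "bij_betw s D S \<Longrightarrow> restrict s D \<in> ext_bijections D S"
  by (auto simp: ext_bijections_def bij_betw_def inj_on_def)

lemma ext_bijections_nonempty:
  assumes "finite D" "finite S" "card D = card S"
  shows "ext_bijections D S \<noteq> {}"
  using finite_same_card_bij[OF assms] restrict_in_ext_bijections by blast

lemma bij_betw_extend:
  assumes "finite D" "finite S" "card D = card S" "A \<subseteq> D" "inj_on f A" "f ` A \<subseteq> S"
  obtains g where "bij_betw g D S" "\<And>x. x \<in> A \<Longrightarrow> g x = f x"
proof -
  have "card (D - A) = card (S - f ` A)"
    using assms by (simp add: card_Diff_subset card_image finite_subset)
  then obtain h where h: "bij_betw h (D - A) (S - f ` A)"
    using finite_same_card_bij[of "D - A" "S - f ` A"] assms(1,2) by auto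
  have "bij_betw (\<lambda>x. if x \<in> A then f x else h x) (A \<union> (D - A)) (f ` A \<union> (S - f ` A))"
    using assms(5) h by (intro bij_betw_disjoint_Un) (auto simp: inj_on_imp_bij_betw)
  moreover have "A \<union> (D - A) = D" "f ` A \<union> (S - f ` A) = S"
    using assms(4,6) by auto
  ultimately show ?thesis
    by (intro that[of "\<lambda>x. if x \<in> A then f x else h x"]) auto
qed

definition relabel :: "('b \<Rightarrow> 'c) \<Rightarrow> 'a set \<Rightarrow> ('a \<Rightarrow> 'b) \<Rightarrow> 'a \<Rightarrow> 'c" where
  "relabel \<tau> D s = (\<lambda>x \<in> D. \<tau> (s x))"

lemma relabel_cancel:
  assumes "\<And>y. y \<in> S \<Longrightarrow> \<tau>' (\<tau> y) = y" "s \<in> D \<rightarrow>\<^sub>E S"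
  shows "relabel \<tau>' D (relabel \<tau> D s) = s"
  using assms by (auto simp: relabel_def PiE_iff extensional_def)

lemma relabel_in_ext_bijections:
  assumes "bij_betw \<tau> S S" "s \<in> ext_bijections D S"
  shows "relabel \<tau> D s \<in> ext_bijections D S"
proof -
  have "bij_betw (\<tau> \<circ> s) D S"
    using assms by (auto simp: ext_bijections_def intro: bij_betw_trans)
  then show ?thesis
    using restrict_in_ext_bijections by (simp add: relabel_def comp_def)
qed

lemma bij_betw_relabel_ext_bijections:
  assumes "bij_betw \<tau> S S"
  shows "bij_betw (relabel \<tau> D) (ext_bijections D S) (ext_bijections D S)"
proof (rule bij_betw_byWitness[where f' = "relabel (inv_into S \<tau>) D"])
  note cancel = bij_betw_inv_into_left[OF assms] bij_betw_inv_into_right[OF assms]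
  show "\<forall>s \<in> ext_bijections D S. relabel (inv_into S \<tau>) D (relabel \<tau> D s) = s"
    using relabel_cancel[of S "inv_into S \<tau>" \<tau>] cancel(1) by (auto simp: ext_bijections_def)
  show "\<forall>s \<in> ext_bijections D S. relabel \<tau> D (relabel (inv_into S \<tau>) D s) = s"
    using relabel_cancel[of S \<tau> "inv_into S \<tau>"] cancel(2) by (auto simp: ext_bijections_def)
  show "relabel \<tau> D ` ext_bijections D S \<subseteq> ext_bijections D S"
    using relabel_in_ext_bijections[OF assms] by blast
  show "relabel (inv_into S \<tau>) D ` ext_bijections D S \<subseteq> ext_bijections D S"
    using relabel_in_ext_bijections[OF bij_betw_inv_into[OF assms]] by blast
qed

lemma ext_bijections_relabel_transitive:
  assumes "a \<in> ext_bijections D S" "b \<in> ext_bijections D S"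
  obtains \<tau> where "bij_betw \<tau> S S" "relabel \<tau> D a = b"
proof
  show "bij_betw (b \<circ> inv_into D a) S S"
    using assms by (auto simp: ext_bijections_def intro: bij_betw_trans bij_betw_inv_into)
  show "relabel (b \<circ> inv_into D a) D a = b"
    using assms
    by (auto simp: ext_bijections_def relabel_def bij_betw_def PiE_iff extensional_def)
qed

lemma edgesE:
  assumes "\<theta> \<in> edges N"
  obtains a b where "\<theta> = {a, b}" "a \<noteq> b" "a \<in> {1..N}" "b \<in> {1..N}"
  using assms unfolding edges_def by blast

lemma finite_edges: "finite (edges N)"
  by (rule finite_subset[of _ "Pow {1..N}"]) (auto simp: edges_def)

lemma edges_nonempty: "N \<ge> 2 \<Longrightarrow> edges N \<noteq> {}"
proof -
  assume "N \<ge> 2"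
  then have "{1, 2} \<in> edges N"
    unfolding edges_def by (intro CollectI exI[of _ 1] exI[of _ 2]) auto
  then show ?thesis by blast
qed

lemma finite_file_space: "finite (file_space N)"
  unfolding file_space_def by (intro finite_PiE finite_edges) auto

lemma file_space_nonempty: "file_space N \<noteq> {}"
  unfolding file_space_def by (simp add: PiE_eq_empty_iff)

lemma other_doubleton: "a \<noteq> b \<Longrightarrow> other {a, b} a = b"
  by (simp add: other_def insert_Diff_if)

lemma edge_other:
  assumes "\<theta> \<in> edges N" "j \<in> \<theta>"
  shows "\<theta> = {j, other \<theta> j}" "other \<theta> j \<noteq> j" "other \<theta> j \<in> {1..N}"
proof -
  obtain a b where ab: "\<theta> = {a, b}" "a \<noteq> b" "a \<in> {1..N}" "b \<in> {1..N}"
    using edgesE[OF assms(1)] .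
  have "j = a \<and> other \<theta> j = b \<or> j = b \<and> other \<theta> j = a"
    using assms(2) ab other_doubleton[of a b] other_doubleton[of b a]
    by (auto simp: insert_commute)
  then show "\<theta> = {j, other \<theta> j}" "other \<theta> j \<noteq> j" "other \<theta> j \<in> {1..N}"
    using ab by auto
qed

lemma finite_nbhd: "finite (nbhd N j)"
  by (simp add: nbhd_def)

lemma card_Pow_nbhd: "j \<in> {1..N} \<Longrightarrow> card (Pow (nbhd N j)) = flen N"
  by (simp add: nbhd_def card_Pow flen_def)

lemma Omega_doubleton_iff:
  "a \<noteq> b \<Longrightarrow> P \<in> Omega N {a, b} \<longleftrightarrow> P \<subseteq> {1..N} \<and> (a \<in> P \<longleftrightarrow> b \<notin> P)"
  by (cases "a \<in> P"; cases "b \<in> P") (auto simp: Omega_def Int_insert_right)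

lemma OmegaE:
  assumes "\<theta> \<in> edges N" "P \<in> Omega N \<theta>"
  obtains a b where "\<theta> = {a, b}" "a \<noteq> b" "a \<in> P" "b \<notin> P"
proof -
  obtain a b where ab: "\<theta> = {a, b}" "a \<noteq> b" using edgesE[OF assms(1)] by blast
  then have "a \<in> P \<longleftrightarrow> b \<notin> P" using assms(2) Omega_doubleton_iff by blast
  then show ?thesis using that ab by (metis insert_commute)
qed

lemma finite_Omega: "finite (Omega N \<theta>)"
  by (rule finite_subset[of _ "Pow {1..N}"]) (auto simp: Omega_def)

lemma card_Omega:
  assumes "\<theta> \<in> edges N"
  shows "card (Omega N \<theta>) = flen N"
proof -
  obtain a b where ab: "\<theta> = {a, b}" "a \<noteq> b" "a \<in> {1..N}" "b \<in> {1..N}"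
    using edgesE[OF assms] .
  have "bij_betw (\<lambda>P. P - {b}) (Omega N \<theta>) (Pow (nbhd N b))"
  proof (rule bij_betw_byWitness[where f' = "\<lambda>Q. if a \<in> Q then Q else insert b Q"])
    show "\<forall>P \<in> Omega N \<theta>. (if a \<in> P - {b} then P - {b} else insert b (P - {b})) = P"
      using ab by (auto simp: Omega_doubleton_iff)
    show "\<forall>Q \<in> Pow (nbhd N b). (if a \<in> Q then Q else insert b Q) - {b} = Q"
      by (auto simp: nbhd_def)
    show "(\<lambda>P. P - {b}) ` Omega N \<theta> \<subseteq> Pow (nbhd N b)"
      using ab by (auto simp: Omega_def nbhd_def)
    show "(\<lambda>Q. if a \<in> Q then Q else insert b Q) ` Pow (nbhd N b) \<subseteq> Omega N \<theta>"
      using ab by (auto simp: Omega_doubleton_iff nbhd_def)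
  qed
  then show ?thesis using card_Pow_nbhd[OF ab(4)] by (simp add: bij_betw_same_card)
qed

definition pinned :: "nat set \<Rightarrow> nat \<Rightarrow> nat set \<Rightarrow> nat set" where
  "pinned \<theta> j P = (if j \<in> \<theta> then insert (other \<theta> j) (P - {j}) else P - {j})"

abbreviation labellings :: "nat \<Rightarrow> nat \<Rightarrow> (nat set \<Rightarrow> nat) set" where
  "labellings N j \<equiv> ext_bijections (Pow (nbhd N j)) {1..flen N}"

lemma perms_eq_ext_bijections: "perms N \<theta> = ext_bijections (Omega N \<theta>) {1..flen N}"
  by (simp add: perms_def ext_bijections_def)

lemma completions_eq:
  "completions N \<theta> \<pi> j =
     {s \<in> labellings N j. \<forall>P \<in> Omega N \<theta>. j \<in> P \<longrightarrow> s (pinned \<theta> j P) = \<pi> P}"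
  by (auto simp: completions_def ext_bijections_def pinned_def)

lemma pinned_mem:
  assumes "\<theta> \<in> edges N" "P \<in> Omega N \<theta>" "j \<in> P"
  shows "pinned \<theta> j P \<in> Pow (nbhd N j) - {{}}"
proof (cases "j \<in> \<theta>")
  case True
  note o = edge_other[OF assms(1) True]
  then show ?thesis
    using assms(2) Omega_doubleton_iff[OF o(2)[symmetric], of P N]
    by (auto simp: pinned_def nbhd_def True)
next
  case False
  obtain a b where ab: "\<theta> = {a, b}" "a \<noteq> b" using edgesE[OF assms(1)] by blast
  then have "a \<in> P - {j} \<or> b \<in> P - {j}" "P \<subseteq> {1..N}"
    using assms(2) False Omega_doubleton_iff[OF ab(2)] by auto
  then show ?thesis using False by (auto simp: pinned_def nbhd_def)
qed

lemma inj_on_pinned: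
  assumes "\<theta> \<in> edges N"
  shows "inj_on (pinned \<theta> j) {P \<in> Omega N \<theta>. j \<in> P}"
proof (rule inj_on_inverseI[where g = "\<lambda>Q. insert j (if j \<in> \<theta> then Q - {other \<theta> j} else Q)"])
  fix P assume P: "P \<in> {P \<in> Omega N \<theta>. j \<in> P}"
  show "insert j (if j \<in> \<theta> then pinned \<theta> j P - {other \<theta> j} else pinned \<theta> j P) = P"
  proof (cases "j \<in> \<theta>")
    case True
    note o = edge_other[OF assms True]
    have "other \<theta> j \<notin> P"
      using P Omega_doubleton_iff[OF o(2)[symmetric], of P N] o(1) by auto
    then show ?thesis using P True o(2) by (auto simp: pinned_def)
  qed (use P in \<open>auto simp: pinned_def\<close>)
qed

lemma finite_perms: "finite (perms N \<theta>)"
  by (simp add: perms_eq_ext_bijections finite_ext_bijections finite_Omega)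

lemma perms_nonempty: "\<theta> \<in> edges N \<Longrightarrow> perms N \<theta> \<noteq> {}"
  unfolding perms_eq_ext_bijections
  by (rule ext_bijections_nonempty) (simp_all add: finite_Omega card_Omega)

lemma finite_labellings: "finite (labellings N j)"
  by (simp add: finite_ext_bijections finite_nbhd)

lemma labellings_nonempty: "j \<in> {1..N} \<Longrightarrow> labellings N j \<noteq> {}"
  by (rule ext_bijections_nonempty) (simp_all add: card_Pow_nbhd finite_nbhd)

lemma completions_subset_labellings: "completions N \<theta> \<pi> j \<subseteq> labellings N j"
  by (auto simp: completions_eq)

lemma finite_completions: "finite (completions N \<theta> \<pi> j)"
  using finite_subset[OF completions_subset_labellings finite_labellings] .

lemma completions_nonempty:
  assumes "\<theta> \<in> edges N" "j \<in> {1..N}" "\<pi> \<in> perms N \<theta>"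
  shows "completions N \<theta> \<pi> j \<noteq> {}"
proof -
  define \<Omega>\<^sub>j where "\<Omega>\<^sub>j = {P \<in> Omega N \<theta>. j \<in> P}"
  let ?A = "pinned \<theta> j ` \<Omega>\<^sub>j" and ?f = "\<pi> \<circ> inv_into \<Omega>\<^sub>j (pinned \<theta> j)"
  have \<pi>: "bij_betw \<pi> (Omega N \<theta>) {1..flen N}"
    using assms(3) by (simp add: perms_eq_ext_bijections ext_bijections_def)
  have inj: "inj_on (pinned \<theta> j) \<Omega>\<^sub>j"
    unfolding \<Omega>\<^sub>j_def by (rule inj_on_pinned[OF assms(1)])
  have "bij_betw ?f ?A (\<pi> ` \<Omega>\<^sub>j)"
    using bij_betw_inv_into[OF inj_on_imp_bij_betw[OF inj]]
      inj_on_imp_bij_betw[OF inj_on_subset[OF bij_betw_imp_inj_on[OF \<pi>]]]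
    by (rule bij_betw_trans) (auto simp: \<Omega>\<^sub>j_def)
  then have "inj_on ?f ?A" "?f ` ?A \<subseteq> {1..flen N}"
    using \<pi> by (auto simp: bij_betw_def \<Omega>\<^sub>j_def)
  moreover have "?A \<subseteq> Pow (nbhd N j)"
    using pinned_mem[OF assms(1)] by (auto simp: \<Omega>\<^sub>j_def)
  moreover have "finite (Pow (nbhd N j))" "card (Pow (nbhd N j)) = card {1..flen N}"
    using card_Pow_nbhd[OF assms(2)] by (simp_all add: finite_nbhd)
  ultimately obtain g where
    g: "bij_betw g (Pow (nbhd N j)) {1..flen N}" "\<And>Q. Q \<in> ?A \<Longrightarrow> g Q = ?f Q"
    using bij_betw_extend[of "Pow (nbhd N j)" "{1..flen N}" ?A ?f] by blast
  have "restrict g (Pow (nbhd N j)) \<in> completions N \<theta> \<pi> j"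
    using restrict_in_ext_bijections[OF g(1)] g(2) pinned_mem[OF assms(1)] inj
    by (auto simp: completions_eq \<Omega>\<^sub>j_def)
  then show ?thesis by blast
qed

lemma query_distE:
  assumes "\<theta> \<in> edges N" "\<sigma> \<in> set_pmf (query_dist N \<theta>)"
  obtains \<pi> where "\<pi> \<in> perms N \<theta>" "\<sigma> \<in> PiE {1..N} (completions N \<theta> \<pi>)"
proof -
  have "finite (PiE {1..N} (completions N \<theta> \<pi>))" for \<pi>
    by (intro finite_PiE) (auto simp: finite_completions)
  moreover have "PiE {1..N} (completions N \<theta> \<pi>) \<noteq> {}" if "\<pi> \<in> perms N \<theta>" for \<pi>
    using completions_nonempty[OF assms(1) _ that] by (auto simp: PiE_eq_empty_iff)
  ultimately show ?thesis
    using that assms(2) finite_perms perms_nonempty[OF assms(1)] by (auto simp: query_dist_def)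
qed

lemma set_pmf_schemeD:
  assumes "N \<ge> 2" "(\<theta>, W, \<sigma>) \<in> set_pmf (scheme N)"
  shows "\<theta> \<in> edges N" "W \<in> file_space N" "\<sigma> \<in> set_pmf (query_dist N \<theta>)"
  using assms finite_edges edges_nonempty finite_file_space file_space_nonempty
  by (auto simp: scheme_def)

section \<open>Privacy\<close>

lemma relabel_in_completions:
  assumes "\<theta> \<in> edges N" "s \<in> completions N \<theta> \<pi> j" "bij_betw \<tau> {1..flen N} {1..flen N}"
  shows "relabel \<tau> (Pow (nbhd N j)) s \<in> completions N \<theta> (relabel \<tau> (Omega N \<theta>) \<pi>) j"
  using assms relabel_in_ext_bijections[OF assms(3)] pinned_mem[OF assms(1)]
  by (auto simp: completions_eq relabel_def)

lemma bij_betw_relabel_completions: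
  assumes "\<theta> \<in> edges N" "\<pi> \<in> perms N \<theta>" "bij_betw \<tau> {1..flen N} {1..flen N}"
  shows "bij_betw (relabel \<tau> (Pow (nbhd N j)))
           (completions N \<theta> \<pi> j) (completions N \<theta> (relabel \<tau> (Omega N \<theta>) \<pi>) j)"
proof -
  let ?S = "{1..flen N}" and ?D = "Pow (nbhd N j)" and ?\<rho> = "inv_into {1..flen N} \<tau>"
  note cancel = bij_betw_inv_into_left[OF assms(3)] bij_betw_inv_into_right[OF assms(3)]
  have "relabel ?\<rho> (Omega N \<theta>) (relabel \<tau> (Omega N \<theta>) \<pi>) = \<pi>"
    using relabel_cancel[of ?S "?\<rho>" \<tau>, OF cancel(1)] assms(2) unfolding perms_def by blast
  then have inv_maps_to:
    "relabel ?\<rho> ?D ` completions N \<theta> (relabel \<tau> (Omega N \<theta>) \<pi>) j \<subseteq> completions N \<theta> \<pi> j"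
    using relabel_in_completions[OF assms(1) _ bij_betw_inv_into[OF assms(3)]] by force
  show ?thesis
  proof (rule bij_betw_byWitness[where f' = "relabel ?\<rho> ?D"])
    show "\<forall>s \<in> completions N \<theta> \<pi> j. relabel ?\<rho> ?D (relabel \<tau> ?D s) = s"
      using relabel_cancel[of ?S "?\<rho>" \<tau>] cancel(1)
      by (auto simp: completions_eq ext_bijections_def)
    show "\<forall>s \<in> completions N \<theta> (relabel \<tau> (Omega N \<theta>) \<pi>) j. relabel \<tau> ?D (relabel ?\<rho> ?D s) = s"
      using relabel_cancel[of ?S \<tau> "?\<rho>"] cancel(2)
      by (auto simp: completions_eq ext_bijections_def)
    show "relabel \<tau> ?D ` completions N \<theta> \<pi> j \<subseteq> completions N \<theta> (relabel \<tau> (Omega N \<theta>) \<pi>) j"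
      using relabel_in_completions[OF assms(1) _ assms(3)] by blast
  qed (rule inv_maps_to)
qed

definition query_marginal :: "nat \<Rightarrow> nat set \<Rightarrow> nat \<Rightarrow> (nat set \<Rightarrow> nat) pmf" where
  "query_marginal N \<theta> j = pmf_of_set (perms N \<theta>) \<bind> (\<lambda>\<pi>. pmf_of_set (completions N \<theta> \<pi> j))"

lemma set_pmf_of_set_perms: "\<theta> \<in> edges N \<Longrightarrow> set_pmf (pmf_of_set (perms N \<theta>)) = perms N \<theta>"
  using finite_perms perms_nonempty by simp

lemma query_marginal_relabel:
  assumes "\<theta> \<in> edges N" "j \<in> {1..N}" "bij_betw \<tau> {1..flen N} {1..flen N}"
  shows "map_pmf (relabel \<tau> (Pow (nbhd N j))) (query_marginal N \<theta> j) = query_marginal N \<theta> j"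
proof -
  let ?r = "relabel \<tau> (Omega N \<theta>)"
  have "map_pmf (relabel \<tau> (Pow (nbhd N j))) (query_marginal N \<theta> j) =
        pmf_of_set (perms N \<theta>) \<bind> (\<lambda>\<pi>. pmf_of_set (completions N \<theta> (?r \<pi>) j))"
    unfolding query_marginal_def map_bind_pmf
    using assms set_pmf_of_set_perms bij_betw_relabel_completions[OF assms(1) _ assms(3)]
      completions_nonempty finite_completions
    by (intro bind_pmf_cong refl map_pmf_of_set_bij_betw) auto
  also have "\<dots> = map_pmf ?r (pmf_of_set (perms N \<theta>)) \<bind> (\<lambda>\<pi>. pmf_of_set (completions N \<theta> \<pi> j))"
    by (simp add: bind_map_pmf)
  also have "map_pmf ?r (pmf_of_set (perms N \<theta>)) = pmf_of_set (perms N \<theta>)"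
    using bij_betw_relabel_ext_bijections[OF assms(3)] perms_nonempty[OF assms(1)] finite_perms
    by (intro map_pmf_of_set_bij_betw) (simp_all add: perms_eq_ext_bijections)
  finally show ?thesis by (simp add: query_marginal_def)
qed

lemma query_marginal_uniform:
  assumes "\<theta> \<in> edges N" "j \<in> {1..N}"
  shows "query_marginal N \<theta> j = pmf_of_set (labellings N j)"
proof (rule eq_pmf_of_set_if_transitive_invariance)
  show "finite (labellings N j)" by (rule finite_labellings)
  show "set_pmf (query_marginal N \<theta> j) \<subseteq> labellings N j"
    using subsetD[OF completions_subset_labellings] finite_completions
      completions_nonempty[OF assms] set_pmf_of_set_perms[OF assms(1)]
    by (auto simp del: atLeastAtMost_iff simp: query_marginal_def)
next
  fix a b assume "a \<in> labellings N j" "b \<in> labellings N j"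
  then obtain \<tau> where \<tau>: "bij_betw \<tau> {1..flen N} {1..flen N}" "relabel \<tau> (Pow (nbhd N j)) a = b"
    by (rule ext_bijections_relabel_transitive)
  moreover have "inj_on (relabel \<tau> (Pow (nbhd N j))) (labellings N j)"
    using bij_betw_relabel_ext_bijections[OF \<tau>(1)] by (rule bij_betw_imp_inj_on)
  ultimately show "\<exists>g. inj_on g (labellings N j) \<and>
                      map_pmf g (query_marginal N \<theta> j) = query_marginal N \<theta> j \<and> g a = b"
    using query_marginal_relabel[OF assms] by blast
qed

lemma query_dist_component:
  assumes "\<theta> \<in> edges N" "j \<in> {1..N}"
  shows "map_pmf (\<lambda>\<sigma>. \<sigma> j) (query_dist N \<theta>) = pmf_of_set (labellings N j)"
proof -
  have "map_pmf (\<lambda>\<sigma>. \<sigma> j) (query_dist N \<theta>) = query_marginal N \<theta> j"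
    unfolding query_dist_def query_marginal_def map_bind_pmf
    using assms completions_nonempty finite_completions set_pmf_of_set_perms
    by (intro bind_pmf_cong refl map_pmf_of_set_PiE_component) auto
  then show ?thesis using query_marginal_uniform[OF assms] by simp
qed

lemma scheme_server_view:
  assumes "N \<ge> 2" "j \<in> {1..N}"
  shows "map_pmf (\<lambda>(\<theta>, W, \<sigma>). (\<theta>, \<sigma> j, W)) (scheme N) =
         pair_pmf (pmf_of_set (edges N))
           (pair_pmf (pmf_of_set (labellings N j)) (pmf_of_set (file_space N)))"
proof -
  have edges: "set_pmf (pmf_of_set (edges N)) = edges N"
    using finite_edges edges_nonempty[OF assms(1)] by simp
  have "map_pmf (\<lambda>(\<theta>, W, \<sigma>). (\<theta>, \<sigma> j, W)) (scheme N) =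
        pmf_of_set (edges N) \<bind> (\<lambda>\<theta>. pmf_of_set (file_space N) \<bind>
          (\<lambda>W. map_pmf (\<lambda>\<sigma>. (\<theta>, \<sigma> j, W)) (query_dist N \<theta>)))"
    by (simp add: scheme_def map_bind_pmf map_pmf_def[symmetric] map_pmf_comp)
  also have "\<dots> = pmf_of_set (edges N) \<bind> (\<lambda>\<theta>. pmf_of_set (file_space N) \<bind>
          (\<lambda>W. map_pmf (\<lambda>s. (\<theta>, s, W)) (pmf_of_set (labellings N j))))"
    using query_dist_component[OF _ assms(2)] edges
    by (intro bind_pmf_cong refl)
      (simp add: map_pmf_comp[of "\<lambda>s. (_, s, _)" "\<lambda>\<sigma>. \<sigma> j", symmetric])
  also have "\<dots> = pair_pmf (pmf_of_set (edges N))
                    (pair_pmf (pmf_of_set (labellings N j)) (pmf_of_set (file_space N)))"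
    unfolding pair_pmf_def map_pmf_def bind_assoc_pmf bind_return_pmf
    by (subst bind_commute_pmf[of "pmf_of_set (file_space N)"]) (rule refl)
  finally show ?thesis .
qed

lemma scheme_private:
  assumes "N \<ge> 2" "j \<in> {1..N}"
  shows "cond_ent (scheme N) (\<lambda>(\<theta>, W, \<sigma>). \<theta>)
           (\<lambda>(\<theta>, W, \<sigma>). (\<sigma> j, restrict W {e \<in> edges N. j \<in> e}))
         = ent (scheme N) (\<lambda>(\<theta>, W, \<sigma>). \<theta>)"
proof -
  let ?X = "\<lambda>(\<theta>, W, \<sigma>). \<theta>" and ?Z = "\<lambda>(\<theta>, W, \<sigma>). (\<sigma> j, W)"
  let ?h = "\<lambda>(s, W). (s, restrict W {e \<in> edges N. j \<in> e})"
  have "map_pmf (\<lambda>\<omega>. (?X \<omega>, ?Z \<omega>)) (scheme N) = map_pmf (\<lambda>(\<theta>, W, \<sigma>). (\<theta>, \<sigma> j, W)) (scheme N)"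
    by (simp add: case_prod_beta')
  also have "\<dots> = pair_pmf (pmf_of_set (edges N))
                    (pair_pmf (pmf_of_set (labellings N j)) (pmf_of_set (file_space N)))"
    by (rule scheme_server_view[OF assms])
  finally have "cond_ent (scheme N) ?X (\<lambda>\<omega>. ?h (?Z \<omega>)) = ent (scheme N) ?X"
    by (rule cond_ent_eq_ent_if_pair_pmf)
      (use finite_edges edges_nonempty[OF assms(1)] finite_labellings
        labellings_nonempty[OF assms(2)] finite_file_space file_space_nonempty in simp_all)
  then show ?thesis by (simp add: case_prod_beta')
qed

section \<open>Answers\<close>

lemma odd_card_toggle:
  assumes "finite P" "m \<in> P"
  shows "odd (card {v \<in> P. B v \<noteq> (c \<and> v = m)}) \<longleftrightarrow> odd (card {v \<in> P. B v}) \<noteq> c"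
proof (cases c)
  case True
  show ?thesis
  proof (cases "B m")
    case Bm: True
    have "{v \<in> P. B v \<noteq> (c \<and> v = m)} = {v \<in> P. B v} - {m}" using True Bm by auto
    moreover have "card {v \<in> P. B v} \<noteq> 0" using assms Bm by auto
    ultimately show ?thesis using True assms Bm by (simp add: card_Diff_singleton odd_pos)
  next
    case Bm: False
    have "{v \<in> P. B v \<noteq> (c \<and> v = m)} = insert m {v \<in> P. B v}" using True Bm assms by auto
    then show ?thesis using True assms Bm by simp
  qed
qed simp

abbreviation answer_space :: "nat \<Rightarrow> nat \<Rightarrow> (nat set \<Rightarrow> bool) set" where
  "answer_space N j \<equiv> (Pow (nbhd N j) - {{}}) \<rightarrow>\<^sub>E (UNIV :: bool set)"

lemma answer_in_answer_space: "answer N W j s \<in> answer_space N j"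
  by (simp add: answer_def)

lemma card_answer_space: "j \<in> {1..N} \<Longrightarrow> card (answer_space N j) = 2 ^ (flen N - 1)"
  using card_Pow_nbhd[of j N] by (simp add: card_PiE card_Diff_singleton finite_nbhd)

definition toggle :: "nat \<Rightarrow> nat \<Rightarrow> (nat set \<Rightarrow> nat) \<Rightarrow> (nat set \<Rightarrow> bool) \<Rightarrow>
    (nat set \<Rightarrow> nat \<Rightarrow> bool) \<Rightarrow> nat set \<Rightarrow> nat \<Rightarrow> bool" where
  "toggle N j s c W = (\<lambda>e \<in> edges N. \<lambda>l \<in> {1..flen N}.
      W e l \<noteq> (\<exists>P \<in> Pow (nbhd N j) - {{}}. c P \<and> e = {j, Min P} \<and> l = s P))"

lemma toggle_in_file_space: "toggle N j s c W \<in> file_space N"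
  by (auto simp: toggle_def file_space_def)

lemma toggle_toggle: "W \<in> file_space N \<Longrightarrow> toggle N j s c (toggle N j s c W) = W"
  unfolding toggle_def file_space_def by (intro ext) (auto simp: PiE_iff extensional_def)

lemma answer_toggle:
  assumes j: "j \<in> {1..N}" and s: "s \<in> labellings N j"
  shows "answer N (toggle N j s c W) j s = (\<lambda>P \<in> Pow (nbhd N j) - {{}}. answer N W j s P \<noteq> c P)"
    (is "?lhs = ?rhs")
proof
  fix P
  show "?lhs P = ?rhs P"
  proof (cases "P \<in> Pow (nbhd N j) - {{}}")
    case P: True
    have s_inj: "inj_on s (Pow (nbhd N j))" and sP: "s P \<in> {1..flen N}"
      using s P by (auto simp: ext_bijections_def bij_betw_def)
    have fin: "finite Q" if "Q \<in> Pow (nbhd N j)" for Q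
      using that finite_subset[OF _ finite_nbhd] by blast
    have "toggle N j s c W {j, v} (s P) = (W {j, v} (s P) \<noteq> (c P \<and> v = Min P))" if v: "v \<in> P" for v
    proof -
      have "v \<noteq> j" "v \<in> {1..N}" using v P by (auto simp: nbhd_def)
      then have "{j, v} \<in> edges N" using j unfolding edges_def by blast
      moreover have "Min Q \<noteq> j" if "Q \<in> Pow (nbhd N j) - {{}}" for Q
        using Min_in[OF fin] that by (auto simp: nbhd_def)
      ultimately show ?thesis
        using sP P s_inj[THEN inj_onD] \<open>v \<noteq> j\<close> by (auto simp: toggle_def doubleton_eq_iff)
    qed
    then have "{v \<in> P. toggle N j s c W {j, v} (s P)} =
               {v \<in> P. W {j, v} (s P) \<noteq> (c P \<and> v = Min P)}"
      by blast
    then show ?thesis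
      using P odd_card_toggle[OF fin Min_in[OF fin], of P "\<lambda>v. W {j, v} (s P)" "c P"]
      by (simp add: answer_def)
  qed (auto simp: answer_def)
qed

lemma map_pmf_toggle_file_space:
  "map_pmf (toggle N j s c) (pmf_of_set (file_space N)) = pmf_of_set (file_space N)"
proof -
  have "bij_betw (toggle N j s c) (file_space N) (file_space N)"
    by (rule bij_betw_byWitness[where f' = "toggle N j s c"])
      (auto simp: toggle_toggle toggle_in_file_space)
  then show ?thesis by (rule map_pmf_of_set_bij_betw[OF _ file_space_nonempty finite_file_space])
qed

lemma answer_uniform:
  assumes j: "j \<in> {1..N}" and s: "s \<in> labellings N j"
  shows "map_pmf (\<lambda>W. answer N W j s) (pmf_of_set (file_space N)) = pmf_of_set (answer_space N j)"
    (is "?\<mu> = _")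
proof (rule eq_pmf_of_set_if_transitive_invariance)
  show "finite (answer_space N j)" by (simp add: finite_PiE finite_nbhd)
  show "set_pmf ?\<mu> \<subseteq> answer_space N j"
    unfolding set_map_pmf using answer_in_answer_space by blast
next
  fix a b assume ab: "a \<in> answer_space N j" "b \<in> answer_space N j"
  define c where "c P = (a P \<noteq> b P)" for P
  define g where "g x = (\<lambda>P \<in> Pow (nbhd N j) - {{}}. x P \<noteq> c P)" for x :: "nat set \<Rightarrow> bool"
  have "inj_on g (answer_space N j)"
    by (rule inj_on_inverseI[where g = g]) (auto simp: g_def PiE_iff extensional_def fun_eq_iff)
  moreover have "g a = b"
    using ab by (auto simp: g_def c_def PiE_iff extensional_def fun_eq_iff)
  moreover have "map_pmf g ?\<mu> =
      map_pmf (\<lambda>W. answer N W j s) (map_pmf (toggle N j s c) (pmf_of_set (file_space N)))"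
    by (simp add: map_pmf_comp g_def answer_toggle[OF j s])
  ultimately show "\<exists>g. inj_on g (answer_space N j) \<and> map_pmf g ?\<mu> = ?\<mu> \<and> g a = b"
    unfolding map_pmf_toggle_file_space by blast
qed

lemma ent_answer:
  assumes "N \<ge> 2" "j \<in> {1..N}"
  shows "ent (scheme N) (\<lambda>(\<theta>, W, \<sigma>). answer N W j (\<sigma> j)) = 2 ^ (N - 1) - 1"
proof -
  have "map_pmf (\<lambda>(\<theta>, W, \<sigma>). answer N W j (\<sigma> j)) (scheme N) =
        map_pmf (\<lambda>(\<theta>, s, W). answer N W j s) (map_pmf (\<lambda>(\<theta>, W, \<sigma>). (\<theta>, \<sigma> j, W)) (scheme N))"
    by (simp add: map_pmf_comp case_prod_beta')
  also have "\<dots> = pmf_of_set (labellings N j) \<bind>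
                    (\<lambda>s. map_pmf (\<lambda>W. answer N W j s) (pmf_of_set (file_space N)))"
    unfolding scheme_server_view[OF assms]
    by (simp add: pair_pmf_def map_bind_pmf map_pmf_def[symmetric] map_pmf_comp)
  also have "\<dots> = pmf_of_set (labellings N j) \<bind> (\<lambda>_. pmf_of_set (answer_space N j))"
    using answer_uniform[OF assms(2)] finite_labellings labellings_nonempty[OF assms(2)]
    by (intro bind_pmf_cong) auto
  also have "\<dots> = pmf_of_set (answer_space N j)"
    by simp
  finally have "ent (scheme N) (\<lambda>(\<theta>, W, \<sigma>). answer N W j (\<sigma> j)) = log 2 (card (answer_space N j))"
    by (simp add: ent_eq_pmf_entropy pmf_entropy_pmf_of_set finite_PiE finite_nbhd PiE_eq_empty_iff)
  also have "\<dots> = 2 ^ (N - 1) - 1"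
    using card_answer_space[OF assms(2)] by (simp add: log_nat_power flen_def of_nat_diff)
  finally show ?thesis .
qed

lemma scheme_rate:
  assumes "N \<ge> 2"
  shows "real (flen N) / (\<Sum>j \<in> {1..N}. ent (scheme N) (\<lambda>(\<theta>, W, \<sigma>). answer N W j (\<sigma> j)))
         = (2 ^ (N - 1) / (2 ^ (N - 1) - 1)) * (1 / real N)"
proof -
  have "(\<Sum>j \<in> {1..N}. ent (scheme N) (\<lambda>(\<theta>, W, \<sigma>). answer N W j (\<sigma> j))) = N * (2 ^ (N - 1) - 1)"
    using ent_answer[OF assms] by simp
  moreover have "(2::real) ^ (N - 1) \<ge> 2 ^ 1"
    using assms by (intro power_increasing) auto
  ultimately show ?thesis
    using assms by (simp add: flen_def field_simps)
qed

section \<open>Reliability\<close>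

lemma even_sum_off_diagonal:
  fixes f :: "'a \<Rightarrow> 'a \<Rightarrow> nat"
  assumes "finite A" "\<And>x y. f x y = f y x"
  shows "even (\<Sum>c\<in>A. \<Sum>v\<in>A - {c}. f c v)"
  using assms(1)
proof (induction A rule: finite_induct)
  case (insert x A)
  have "(\<Sum>c\<in>insert x A. \<Sum>v\<in>insert x A - {c}. f c v)
      = (\<Sum>v\<in>A. f x v) + (\<Sum>c\<in>A. \<Sum>v\<in>insert x A - {c}. f c v)"
    using insert by (simp add: insert_Diff_if)
  also have "(\<Sum>c\<in>A. \<Sum>v\<in>insert x A - {c}. f c v) = (\<Sum>c\<in>A. f c x + (\<Sum>v\<in>A - {c}. f c v))"
  proof (rule sum.cong[OF refl])
    fix c assume "c \<in> A"
    then have "insert x A - {c} = insert x (A - {c})" "x \<notin> A - {c}" using insert by auto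
    then show "(\<Sum>v\<in>insert x A - {c}. f c v) = f c x + (\<Sum>v\<in>A - {c}. f c v)"
      using insert by simp
  qed
  finally have "(\<Sum>c\<in>insert x A. \<Sum>v\<in>insert x A - {c}. f c v)
      = 2 * (\<Sum>v\<in>A. f x v) + (\<Sum>c\<in>A. \<Sum>v\<in>A - {c}. f c v)"
    by (simp add: sum.distrib assms(2))
  then show ?case using insert.IH by simp
qed simp

lemma card_Collect_eq_sum: "finite A \<Longrightarrow> card {v \<in> A. Q v} = (\<Sum>v\<in>A. of_bool (Q v) :: nat)"
  by (simp add: Int_def conj_commute)

lemma pinned_doubleton:
  assumes "a \<noteq> b" "c \<in> P" "b \<notin> P"
  shows "pinned {a, b} c P = (if c = a then insert b (P - {a}) else P - {c})"
  using assms other_doubleton[OF assms(1)] by (auto simp: pinned_def)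

lemma odd_sum_card_pinned:
  assumes "a \<noteq> b" "finite P" "a \<in> P" "b \<notin> P"
  shows "odd (\<Sum>c\<in>P. card {v \<in> pinned {a, b} c P. w {c, v}}) \<longleftrightarrow> w {a, b}"
proof -
  define f where "f x y = (of_bool (w {x, y}) :: nat)" for x y
  have f_sym: "f x y = f y x" for x y by (simp add: f_def insert_commute)
  have "card {v \<in> pinned {a, b} c P. w {c, v}} =
          (if c = a then f a b else 0) + (\<Sum>v\<in>P - {c}. f c v)" if "c \<in> P" for c
    using that assms pinned_doubleton[OF assms(1) that assms(4)]
    by (simp add: card_Collect_eq_sum f_def del: sum_of_bool_eq)
  then have "(\<Sum>c\<in>P. card {v \<in> pinned {a, b} c P. w {c, v}}) = f a b + (\<Sum>c\<in>P. \<Sum>v\<in>P - {c}. f c v)"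
    using assms(2,3) by (simp add: sum.distrib sum.delta)
  moreover have "even (\<Sum>c\<in>P. \<Sum>v\<in>P - {c}. f c v)"
    by (rule even_sum_off_diagonal[OF assms(2) f_sym])
  ultimately show ?thesis by (simp add: f_def)
qed

lemma answers_decode:
  assumes "\<theta> \<in> edges N" "\<sigma> \<in> PiE {1..N} (completions N \<theta> \<pi>)" "P \<in> Omega N \<theta>"
  shows "W \<theta> (\<pi> P) \<longleftrightarrow> odd (card {c \<in> P. answer N W c (\<sigma> c) (pinned \<theta> c P)})"
proof -
  obtain a b where ab: "\<theta> = {a, b}" "a \<noteq> b" "a \<in> P" "b \<notin> P"
    using OmegaE[OF assms(1,3)] .
  have P: "P \<subseteq> {1..N}" "finite P"
    using assms(3) finite_subset by (auto simp: Omega_def)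
  have "answer N W c (\<sigma> c) (pinned \<theta> c P) \<longleftrightarrow> odd (card {v \<in> pinned \<theta> c P. W {c, v} (\<pi> P)})"
    if "c \<in> P" for c
  proof -
    have "\<sigma> c \<in> completions N \<theta> \<pi> c" using assms(2) that P(1) by auto
    then have "\<sigma> c (pinned \<theta> c P) = \<pi> P" using assms(3) that by (simp add: completions_eq)
    then show ?thesis using pinned_mem[OF assms(1,3) that] by (simp add: answer_def)
  qed
  then have "{c \<in> P. answer N W c (\<sigma> c) (pinned \<theta> c P)} =
             {c \<in> P. odd (card {v \<in> pinned \<theta> c P. W {c, v} (\<pi> P)})}"
    by blast
  then have "odd (card {c \<in> P. answer N W c (\<sigma> c) (pinned \<theta> c P)}) \<longleftrightarrow>
             odd (\<Sum>c\<in>P. card {v \<in> pinned \<theta> c P. W {c, v} (\<pi> P)})"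
    using P(2) by (simp add: even_sum_iff)
  also have "\<dots> \<longleftrightarrow> W \<theta> (\<pi> P)"
    using odd_sum_card_pinned[OF ab(2) P(2) ab(3,4)] ab(1) by simp
  finally show ?thesis by simp
qed

lemma answers_determine_file:
  assumes "\<theta> \<in> edges N" "W \<in> file_space N" "W' \<in> file_space N" "\<sigma> \<in> set_pmf (query_dist N \<theta>)"
    and same: "\<And>j. j \<in> {1..N} \<Longrightarrow> answer N W j (\<sigma> j) = answer N W' j (\<sigma> j)"
  shows "W \<theta> = W' \<theta>"
proof
  fix l
  obtain \<pi> where \<pi>: "\<pi> \<in> perms N \<theta>" "\<sigma> \<in> PiE {1..N} (completions N \<theta> \<pi>)"
    using query_distE[OF assms(1,4)] .
  show "W \<theta> l = W' \<theta> l"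
  proof (cases "l \<in> {1..flen N}")
    case True
    then have "l \<in> \<pi> ` Omega N \<theta>" using \<pi>(1) by (simp add: perms_def bij_betw_def)
    then obtain P where P: "P \<in> Omega N \<theta>" "l = \<pi> P" by blast
    have "P \<subseteq> {1..N}" using P(1) by (simp add: Omega_def)
    then have "answer N W c (\<sigma> c) = answer N W' c (\<sigma> c)" if "c \<in> P" for c
      using same[of c] that by blast
    then have "{c \<in> P. answer N W c (\<sigma> c) (pinned \<theta> c P)} =
               {c \<in> P. answer N W' c (\<sigma> c) (pinned \<theta> c P)}"
      by auto
    then show ?thesis
      using answers_decode[OF assms(1) \<pi>(2) P(1), of W]
        answers_decode[OF assms(1) \<pi>(2) P(1), of W'] P(2)
      by simp
  next
    case False
    moreover have "W \<theta> \<in> {1..flen N} \<rightarrow>\<^sub>E UNIV" "W' \<theta> \<in> {1..flen N} \<rightarrow>\<^sub>E UNIV"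
      using assms(1-3) by (auto simp: file_space_def)
    ultimately show ?thesis by (metis PiE_arb)
  qed
qed

lemma scheme_reliable:
  assumes "N \<ge> 2"
  shows "cond_ent (scheme N) (\<lambda>(\<theta>, W, \<sigma>). W \<theta>)
           (\<lambda>(\<theta>, W, \<sigma>). (\<theta>, \<sigma>, (\<lambda>j \<in> {1..N}. answer N W j (\<sigma> j)))) = 0"
proof (rule cond_ent_eq_0_if_determined)
  fix \<omega> \<omega>'
  assume \<omega>: "\<omega> \<in> set_pmf (scheme N)" "\<omega>' \<in> set_pmf (scheme N)"
    and Y: "(case \<omega> of (\<theta>, W, \<sigma>) \<Rightarrow> (\<theta>, \<sigma>, \<lambda>j \<in> {1..N}. answer N W j (\<sigma> j))) =
            (case \<omega>' of (\<theta>, W, \<sigma>) \<Rightarrow> (\<theta>, \<sigma>, \<lambda>j \<in> {1..N}. answer N W j (\<sigma> j)))"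
  obtain \<theta> W \<sigma> \<theta>' W' \<sigma>' where \<omega>_eq: "\<omega> = (\<theta>, W, \<sigma>)" "\<omega>' = (\<theta>', W', \<sigma>')"
    by (cases \<omega>, cases \<omega>') auto
  have same: "\<theta>' = \<theta>" "\<sigma>' = \<sigma>"
    "(\<lambda>j \<in> {1..N}. answer N W j (\<sigma> j)) = (\<lambda>j \<in> {1..N}. answer N W' j (\<sigma> j))"
    using Y by (auto simp: \<omega>_eq)
  have "answer N W j (\<sigma> j) = answer N W' j (\<sigma> j)" if "j \<in> {1..N}" for j
    using fun_cong[OF same(3), of j] that by simp
  then have "W \<theta> = W' \<theta>"
    using set_pmf_schemeD[OF assms] \<omega> by (intro answers_determine_file) (auto simp: \<omega>_eq same)
  then show "(case \<omega> of (\<theta>, W, \<sigma>) \<Rightarrow> W \<theta>) = (case \<omega>' of (\<theta>, W, \<sigma>) \<Rightarrow> W \<theta>)"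
    by (simp add: \<omega>_eq same)
qed

theorem theorem8:
  fixes N :: nat
  assumes "N \<ge> 3"
  shows
    \<comment> \<open>reliability: the desired file is determined by (theta,) all queries and all answers\<close>
    "cond_ent (scheme N) (\<lambda>(\<theta>, W, \<sigma>). W \<theta>)
        (\<lambda>(\<theta>, W, \<sigma>). (\<theta>, \<sigma>, (\<lambda>j \<in> {1..N}. answer N W j (\<sigma> j)))) = 0
     \<and> \<comment> \<open>privacy\<close>
     (\<forall>j \<in> {1..N}.
        cond_ent (scheme N) (\<lambda>(\<theta>, W, \<sigma>). \<theta>)
          (\<lambda>(\<theta>, W, \<sigma>). (\<sigma> j, restrict W {e \<in> edges N. j \<in> e}))
        = ent (scheme N) (\<lambda>(\<theta>, W, \<sigma>). \<theta>))
     \<and> \<comment> \<open>rate\<close>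
     real (flen N) / (\<Sum>j \<in> {1..N}. ent (scheme N) (\<lambda>(\<theta>, W, \<sigma>). answer N W j (\<sigma> j)))
       = (2 ^ (N - 1) / (2 ^ (N - 1) - 1)) * (1 / real N)"
proof -
  have "N \<ge> 2" using assms by simp
  then show ?thesis using scheme_reliable scheme_private scheme_rate by blast
qed

end
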